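(* Let $\psi \colon \operatorname{NOp}_{\alpha}(r, d) \to F(r, d + r)$ be the map sending $L$ to $F_{\alpha}(L, d + r)$. Then $\psi$ is surjective and all fibers have the same dimension.
   Context: Let $\bar C$ be an algebraically closed field of characteristic zero, $\alpha\in\bar C$, and $\partial x = x\partial+1$. $\operatorname{NOp}_\alpha(r,d)$ denotes the set of differential operators $L\in\bar C[x-\alpha][\partial]$ of order exactly $r$ and degree at most $d$ whose leading coefficient $\operatorname{lc}_\partial(L)$ does not vanish at $\alpha$. For such $L$ and $d_1\ge r$, the fundamental matrix $F_\alpha(L,d_1)$ is the $r\times(d_1+1)$ matrix whose first $r$ columns form the identity matrix $I_r$ and each of whose rows consists of the first $d_1+1$ coefficients (in powers of $x-\alpha$) of a power series solution of $L$ at $x=\alpha$. $F(r,d)$ denotes the space of all possible fundamental matrices of degree $d$ for operators of order $r$; it is isomorphic to $\mathbb{A}^{r(d+1-r)}$. *)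

theory Defs
  imports "HOL-Computational_Algebra.Computational_Algebra"
begin

text \<open>An operator L = sum_{i=0}^r p_i(x) D^i is represented by its coefficient
 function L :: nat => 'a poly (L i = p_i, a polynomial in x). Its action on a
 power series in t = x - alpha (expansion at alpha) is obtained by re-expanding
 p_i at alpha, i.e. p_i(alpha + t); D = d/dx = d/dt.\<close>

definition op_apply :: "'a::field_char_0 \<Rightarrow> nat \<Rightarrow> (nat \<Rightarrow> 'a poly) \<Rightarrow> 'a fps \<Rightarrow> 'a fps" where
  "op_apply \<alpha> r L y = (\<Sum>i\<le>r. fps_of_poly (pcompose (L i) [:\<alpha>, 1:]) * (fps_deriv ^^ i) y)"

definition NOp :: "'a::field_char_0 \<Rightarrow> nat \<Rightarrow> nat \<Rightarrow> (nat \<Rightarrow> 'a poly) set" where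
  "NOp \<alpha> r d = {L. (\<forall>i>r. L i = 0) \<and> L r \<noteq> 0 \<and> (\<forall>i\<le>r. degree (L i) \<le> d)
                   \<and> poly (L r) \<alpha> \<noteq> 0}"

text \<open>Fundamental matrix F_alpha(L,d1) as an r x (d1+1) matrix (entries outside
 this range are 0): row i holds the first d1+1 coefficients of the power series
 solution whose first r coefficients are the i-th unit vector.\<close>

definition Fmat :: "'a::field_char_0 \<Rightarrow> nat \<Rightarrow> (nat \<Rightarrow> 'a poly) \<Rightarrow> nat \<Rightarrow> nat \<Rightarrow> nat \<Rightarrow> 'a" where
  "Fmat \<alpha> r L d1 = (\<lambda>i j. if i < r \<and> j \<le> d1 then
      (THE y. op_apply \<alpha> r L y = 0 \<and> (\<forall>k<r. fps_nth y k = (if k = i then 1 else 0))) $ j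
    else 0)"

definition Fspace :: "nat \<Rightarrow> nat \<Rightarrow> (nat \<Rightarrow> nat \<Rightarrow> 'a::field_char_0) set" where
  "Fspace r d1 = {M. (\<forall>i<r. \<forall>j<r. M i j = (if i = j then 1 else 0))
                    \<and> (\<forall>i j. \<not> (i < r \<and> j \<le> d1) \<longrightarrow> M i j = 0)}"

inductive polyfun_in :: "'c set \<Rightarrow> (('c \<Rightarrow> 'a::comm_ring_1) \<Rightarrow> 'a) \<Rightarrow> bool" for I where
  const: "polyfun_in I (\<lambda>_. c)"
| var: "i \<in> I \<Longrightarrow> polyfun_in I (\<lambda>v. v i)"
| add: "polyfun_in I P \<Longrightarrow> polyfun_in I Q \<Longrightarrow> polyfun_in I (\<lambda>v. P v + Q v)"
| mult: "polyfun_in I P \<Longrightarrow> polyfun_in I Q \<Longrightarrow> polyfun_in I (\<lambda>v. P v * Q v)"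

definition alg_indep_on :: "('c \<Rightarrow> 'a::comm_ring_1) set \<Rightarrow> 'c set \<Rightarrow> bool" where
  "alg_indep_on S I \<longleftrightarrow> (\<forall>P. polyfun_in I P \<longrightarrow> (\<forall>v\<in>S. P v = 0) \<longrightarrow> (\<forall>v. P v = 0))"

text \<open>Dimension = transcendence degree of the coordinate ring of the Zariski
 closure = maximal number of algebraically independent coordinate functions.\<close>

definition alg_dim :: "('c \<Rightarrow> 'a::comm_ring_1) set \<Rightarrow> nat" where
  "alg_dim S = (GREATEST n. \<exists>I. finite I \<and> card I = n \<and> alg_indep_on S I)"

definition op_coords :: "(nat \<Rightarrow> 'a::zero poly) \<Rightarrow> nat \<times> nat \<Rightarrow> 'a" where
  "op_coords L = (\<lambda>(i, j). coeff (L i) j)"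

end

theory Submission
  imports Defs
begin

text \<open>With \<open>t = x - \<alpha>\<close>, let \<open>w j k\<close> be the coefficient of \<open>t^k\<close> in the \<open>j\<close>-th coefficient of \<open>L\<close>.
  For a power series \<open>y = \<Sum> y_m t^m\<close>, the \<open>n\<close>-th coefficient of \<open>L y\<close> is a linear combination of
  \<open>y_0, \<dots>, y_(n+r)\<close> in which \<open>y_(n+r)\<close> has the factor \<open>w r 0 \<cdot> (n+1)_r \<noteq> 0\<close>. Hence power series
  solutions are determined by their first \<open>r\<close> coefficients, and \<open>F_\<alpha>(L, d+r) = M\<close> iff the rows of
  \<open>M\<close> satisfy the first \<open>d+1\<close> of these equations, which are linear in \<open>w\<close>. As the rows of \<open>M\<close>
  begin with a unit matrix, the \<open>n\<close>-th equations determine the \<open>n\<close>-th column of \<open>w\<close> from its entry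
  \<open>w r n\<close> and the earlier columns. So the fibre over \<open>M\<close> is parametrised by the leading
  coefficient \<open>L_r\<close>, which can be any polynomial of degree at most \<open>d\<close> not vanishing at \<open>\<alpha>\<close>: the
  fibre lies in a linear space of dimension \<open>d+1\<close>, and the \<open>d+1\<close> coefficients of \<open>L_r\<close> are
  algebraically independent on it.\<close>

lemma nat_rec_fixpoint_exists:
  fixes F :: "nat \<Rightarrow> (nat \<Rightarrow> 'b) \<Rightarrow> 'b"
  assumes "\<And>n y y'. (\<And>m. m < n \<Longrightarrow> y m = y' m) \<Longrightarrow> F n y = F n y'"
  shows "\<exists>y. \<forall>n. y n = F n y"
proof -
  let ?y = "wfrec less_than (\<lambda>y n. F n y)"
  have "adm_wf less_than (\<lambda>y n. F n y)"
  proof (unfold adm_wf_def, intro allI impI)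
    fix f g :: "nat \<Rightarrow> 'b" and n :: nat
    assume "\<forall>m. (m, n) \<in> less_than \<longrightarrow> f m = g m"
    then show "F n f = F n g" by (intro assms) simp
  qed
  then have "?y = (\<lambda>n. F n ?y)"
    by (rule wfrec_fixpoint[OF wf_less_than])
  then show ?thesis
    by (intro exI allI) (erule fun_cong)
qed

lemma pochhammer_of_nat_Suc_neq_0:
  "pochhammer (of_nat (Suc n) :: 'a::{comm_semiring_1,semiring_char_0}) r \<noteq> 0"
  unfolding pochhammer_of_nat of_nat_eq_0_iff by (simp add: pochhammer_pos)

lemma fps_nth_funpow_deriv:
  "(fps_deriv ^^ j) Y $ m = pochhammer (of_nat (m + 1)) j * Y $ (m + j)"
proof (induction j arbitrary: m)
  case 0
  then show ?case by simp
next
  case (Suc j)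
  have "(fps_deriv ^^ Suc j) Y $ m = of_nat (m + 1) * ((fps_deriv ^^ j) Y $ (m + 1))"
    by simp
  also have "\<dots> = of_nat (m + 1) * (pochhammer (of_nat (m + 2)) j * Y $ (m + 1 + j))"
    using Suc by simp
  also have "\<dots> = pochhammer (of_nat (m + 1)) (Suc j) * Y $ (m + Suc j)"
    by (simp add: pochhammer_rec algebra_simps)
  finally show ?case .
qed

lemma polyfun_in_cong:
  assumes "polyfun_in I P" "\<And>i. i \<in> I \<Longrightarrow> v i = v' i"
  shows "P v = P v'"
  using assms by (induction rule: polyfun_in.induct) auto

lemma polyfun_in_along_line:
  fixes P :: "('c \<Rightarrow> 'a::field) \<Rightarrow> 'a"
  assumes "polyfun_in I P"
  shows "\<exists>p. \<forall>t. P (\<lambda>x. v x + t * e x) = poly p t"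
  using assms
proof (induction rule: polyfun_in.induct)
  case (const c)
  show ?case by (rule exI[of _ "[:c:]"]) simp
next
  case (var i)
  show ?case by (rule exI[of _ "[:v i, e i:]"]) (simp add: algebra_simps)
next
  case (add P Q)
  then obtain p q where "\<forall>t. P (\<lambda>x. v x + t * e x) = poly p t" "\<forall>t. Q (\<lambda>x. v x + t * e x) = poly q t"
    by blast
  then show ?case by (intro exI[of _ "p + q"]) simp
next
  case (mult P Q)
  then obtain p q where "\<forall>t. P (\<lambda>x. v x + t * e x) = poly p t" "\<forall>t. Q (\<lambda>x. v x + t * e x) = poly q t"
    by blast
  then show ?case by (intro exI[of _ "p * q"]) simp
qed

lemma polyfun_in_linear_form:
  fixes a :: "'c \<Rightarrow> 'a::comm_ring_1"
  assumes "finite F" "F \<subseteq> I"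
  shows "polyfun_in I (\<lambda>v. \<Sum>i\<in>F. a i * v i)"
  using assms
proof (induction F rule: finite_induct)
  case empty
  show ?case using polyfun_in.const[of I 0] by simp
next
  case (insert x F)
  have "polyfun_in I (\<lambda>v. a x * v x + (\<Sum>i\<in>F. a i * v i))"
    by (intro polyfun_in.add polyfun_in.mult polyfun_in.const polyfun_in.var) (use insert in auto)
  then show ?case using insert by simp
qed

lemma sum_pivot_elimination:
  fixes f :: "'c \<Rightarrow> nat \<Rightarrow> 'a::field"
  assumes "finite I" "i0 \<in> I"
  shows "(\<Sum>i\<in>I. (if i = i0 then - (\<Sum>i\<in>I - {i0}. a i * f i N) / f i0 N else a i) * f i l)
    = (\<Sum>i\<in>I - {i0}. a i * (f i l - f i N / f i0 N * f i0 l))"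
proof -
  let ?a = "\<lambda>i. if i = i0 then - (\<Sum>i\<in>I - {i0}. a i * f i N) / f i0 N else a i"
  have "(\<Sum>i\<in>I. ?a i * f i l) = ?a i0 * f i0 l + (\<Sum>i\<in>I - {i0}. ?a i * f i l)"
    using assms by (simp add: sum.remove)
  also have "(\<Sum>i\<in>I - {i0}. ?a i * f i l) = (\<Sum>i\<in>I - {i0}. a i * f i l)"
    by (intro sum.cong) auto
  also have "?a i0 * f i0 l = - (\<Sum>i\<in>I - {i0}. a i * f i N / f i0 N * f i0 l)"
    by (simp add: sum_divide_distrib sum_distrib_right sum_negf)
  also have "- (\<Sum>i\<in>I - {i0}. a i * f i N / f i0 N * f i0 l) + (\<Sum>i\<in>I - {i0}. a i * f i l)
      = (\<Sum>i\<in>I - {i0}. a i * (f i l - f i N / f i0 N * f i0 l))"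
    by (simp add: algebra_simps sum_subtractf)
  finally show ?thesis .
qed

lemma nontrivial_linear_relation_exists:
  fixes f :: "'c \<Rightarrow> nat \<Rightarrow> 'a::field"
  assumes "finite I" "N < card I"
  shows "\<exists>a. (\<exists>i\<in>I. a i \<noteq> 0) \<and> (\<forall>l<N. (\<Sum>i\<in>I. a i * f i l) = 0)"
  using assms
proof (induction N arbitrary: I f)
  case 0
  then obtain i0 where "i0 \<in> I"
    by (metis card.empty ex_in_conv less_irrefl)
  then show ?case
    by (intro exI[of _ "\<lambda>i. if i = i0 then 1 else 0"]) auto
next
  case (Suc N)
  show ?case
  proof (cases "\<forall>i\<in>I. f i N = 0")
    case True
    obtain a where a: "\<exists>i\<in>I. a i \<noteq> 0" "\<forall>l<N. (\<Sum>i\<in>I. a i * f i l) = 0"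
      using Suc.IH[of I f] Suc.prems by auto
    then have "\<forall>l<Suc N. (\<Sum>i\<in>I. a i * f i l) = 0"
      using True by (auto simp: less_Suc_eq)
    then show ?thesis
      using a(1) by blast
  next
    case False
    then obtain i0 where i0: "i0 \<in> I" "f i0 N \<noteq> 0"
      by blast
    have "finite (I - {i0})" "N < card (I - {i0})"
      using Suc.prems i0 by auto
    then obtain a where a: "\<exists>i\<in>I - {i0}. a i \<noteq> 0"
      and rel: "\<forall>l<N. (\<Sum>i\<in>I - {i0}. a i * (f i l - f i N / f i0 N * f i0 l)) = 0"
      using Suc.IH[of "I - {i0}" "\<lambda>i l. f i l - f i N / f i0 N * f i0 l"] by blast
    let ?a = "\<lambda>i. if i = i0 then - (\<Sum>i\<in>I - {i0}. a i * f i N) / f i0 N else a i"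
    have "(\<Sum>i\<in>I. ?a i * f i l) = 0" if "l < Suc N" for l
    proof -
      have "(\<Sum>i\<in>I. ?a i * f i l) = (\<Sum>i\<in>I - {i0}. a i * (f i l - f i N / f i0 N * f i0 l))"
        by (rule sum_pivot_elimination[OF Suc.prems(1) i0(1)])
      also have "\<dots> = 0"
      proof (cases "l = N")
        case True
        then show ?thesis
          using i0(2) by simp
      next
        case False
        then show ?thesis
          using rel that by simp
      qed
      finally show ?thesis .
    qed
    moreover have "\<exists>i\<in>I. ?a i \<noteq> 0"
    proof -
      obtain i where "i \<in> I - {i0}" "a i \<noteq> 0"
        using a by blast
      then show ?thesis
        by (intro bexI[of _ i]) simp_all
    qed
    ultimately show ?thesis
      by (intro exI[of _ ?a]) blast
  qed
qed

lemma alg_indep_on_card_le: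
  fixes S :: "('c \<Rightarrow> 'a::field) set"
  assumes S: "\<And>v. v \<in> S \<Longrightarrow> \<exists>c. v = (\<lambda>x. \<Sum>l<N. c l * b l x)"
    and I: "finite I" "alg_indep_on S I"
  shows "card I \<le> N"
proof (rule ccontr)
  assume "\<not> card I \<le> N"
  then have "N < card I" by simp
  then obtain a where a: "\<exists>i\<in>I. a i \<noteq> 0" "\<forall>l<N. (\<Sum>i\<in>I. a i * b l i) = 0"
    using nontrivial_linear_relation_exists[OF I(1), of N "\<lambda>i l. b l i"] by blast
  define P where "P v = (\<Sum>i\<in>I. a i * v i)" for v :: "'c \<Rightarrow> 'a"
  have poly: "polyfun_in I P"
    unfolding P_def[abs_def] by (rule polyfun_in_linear_form) (use I in auto)
  have "P v = 0" if vS: "v \<in> S" for v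
  proof -
    obtain c where c: "v = (\<lambda>x. \<Sum>l<N. c l * b l x)"
      using S[OF vS] by blast
    have "P v = (\<Sum>i\<in>I. \<Sum>l<N. a i * (c l * b l i))"
      by (simp add: P_def c sum_distrib_left)
    also have "\<dots> = (\<Sum>l<N. \<Sum>i\<in>I. c l * (a i * b l i))"
      by (subst sum.swap) (simp add: mult_ac)
    also have "\<dots> = (\<Sum>l<N. c l * (\<Sum>i\<in>I. a i * b l i))"
      by (simp add: sum_distrib_left)
    also have "\<dots> = 0"
      using a(2) by simp
    finally show ?thesis .
  qed
  then have all: "\<forall>v. P v = 0"
    using I(2) poly unfolding alg_indep_on_def by blast
  obtain i0 where i0: "i0 \<in> I" "a i0 \<noteq> 0"
    using a(1) by blast
  have "P (\<lambda>x. if x = i0 then 1 else 0) = a i0"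
    using i0 I(1) by (simp add: P_def mult.commute[of "a _"] if_distrib cong: if_cong)
  then show False
    using all i0 by simp
qed

lemma alg_dim_eqI:
  assumes "finite I0" "card I0 = N" "alg_indep_on S I0"
    and "\<And>I. finite I \<Longrightarrow> alg_indep_on S I \<Longrightarrow> card I \<le> N"
  shows "alg_dim S = N"
  unfolding alg_dim_def by (rule Greatest_equality) (use assms in auto)

lemma polyfun_in_eq_0_if_finite_nonzeros_on_line:
  fixes P :: "('c \<Rightarrow> 'a::field_char_0) \<Rightarrow> 'a"
  assumes "polyfun_in I P" "finite {t. P (\<lambda>x. v x + t * e x) \<noteq> 0}"
  shows "P v = 0"
proof -
  obtain p where p: "\<forall>t. P (\<lambda>x. v x + t * e x) = poly p t"
    using polyfun_in_along_line[OF assms(1)] by blast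
  have "p = 0"
  proof (rule ccontr)
    assume "p \<noteq> 0"
    then have "finite {t. poly p t = 0}"
      by (rule poly_roots_finite)
    moreover have "finite {t. poly p t \<noteq> 0}"
      using assms(2) p by simp
    moreover have "UNIV = {t. poly p t = 0} \<union> {t. poly p t \<noteq> 0}"
      by blast
    ultimately have "finite (UNIV :: 'a set)"
      by (metis finite_Un)
    then show False
      using infinite_UNIV_char_0 by blast
  qed
  then show ?thesis
    using p[rule_format, of 0] by simp
qed

definition shifted_coeffs :: "'a::comm_ring_1 \<Rightarrow> (nat \<Rightarrow> 'a poly) \<Rightarrow> nat \<Rightarrow> nat \<Rightarrow> 'a" where
  "shifted_coeffs \<alpha> L j k = coeff (L j \<circ>\<^sub>p [:\<alpha>, 1:]) k"

definition seq_op :: "nat \<Rightarrow> (nat \<Rightarrow> nat \<Rightarrow> 'a::comm_ring_1) \<Rightarrow> (nat \<Rightarrow> 'a) \<Rightarrow> nat \<Rightarrow> 'a" where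
  "seq_op r w y n = (\<Sum>j\<le>r. \<Sum>k\<le>n. w j k * pochhammer (of_nat (n - k + 1)) j * y (n - k + j))"

lemma op_apply_nth:
  "op_apply \<alpha> r L Y $ n = seq_op r (shifted_coeffs \<alpha> L) (($) Y) n"
  unfolding op_apply_def seq_op_def shifted_coeffs_def fps_sum_nth fps_mult_nth atLeast0AtMost
    fps_of_poly_nth fps_nth_funpow_deriv
  by (simp add: mult.assoc)

lemma op_apply_eq_0_iff:
  "op_apply \<alpha> r L Y = 0 \<longleftrightarrow> (\<forall>n. seq_op r (shifted_coeffs \<alpha> L) (($) Y) n = 0)"
  by (simp add: fps_eq_iff op_apply_nth)

lemma shifted_coeffs_top: "shifted_coeffs \<alpha> L r 0 = poly (L r) \<alpha>"
  by (simp add: shifted_coeffs_def poly_0_coeff_0[symmetric] poly_pcompose)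

lemma seq_op_cong:
  assumes "\<And>m. m \<le> n + r \<Longrightarrow> y m = y' m"
  shows "seq_op r w y n = seq_op r w y' n"
  unfolding seq_op_def using assms by (intro sum.cong refl) auto

lemma seq_op_split_top:
  "seq_op r w y n = seq_op r w (y(n + r := 0)) n + w r 0 * pochhammer (of_nat (n + 1)) r * y (n + r)"
proof -
  let ?top = "\<lambda>j k. if j = r then if k = 0
    then w r 0 * pochhammer (of_nat (n + 1)) r * y (n + r) else 0 else 0"
  have "seq_op r w y n = (\<Sum>j\<le>r. \<Sum>k\<le>n.
      w j k * pochhammer (of_nat (n - k + 1)) j * (y(n + r := 0)) (n - k + j) + ?top j k)"
    unfolding seq_op_def by (intro sum.cong refl) auto
  also have "\<dots> = seq_op r w (y(n + r := 0)) n + (\<Sum>j\<le>r. \<Sum>k\<le>n. ?top j k)"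
    unfolding seq_op_def by (simp only: sum.distrib)
  also have "(\<Sum>j\<le>r. \<Sum>k\<le>n. ?top j k) = w r 0 * pochhammer (of_nat (n + 1)) r * y (n + r)"
    by (subst sum.swap) simp
  finally show ?thesis .
qed

lemma seq_op_solution_exists:
  fixes w :: "nat \<Rightarrow> nat \<Rightarrow> 'a::field_char_0"
  assumes "w r 0 \<noteq> 0"
  shows "\<exists>y. (\<forall>n. seq_op r w y n = 0) \<and> (\<forall>m<r. y m = init m)"
proof -
  define F where "F m y = (if m < r then init m else
     - seq_op r w (y(m := 0)) (m - r) / (w r 0 * pochhammer (of_nat (m - r + 1)) r))"
    for m and y :: "nat \<Rightarrow> 'a"
  have "F n y = F n y'" if "\<And>m. m < n \<Longrightarrow> y m = y' m" for n y y'
  proof (cases "n < r")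
    case False
    have "seq_op r w (y(n := 0)) (n - r) = seq_op r w (y'(n := 0)) (n - r)"
      by (rule seq_op_cong) (use that False in auto)
    then show ?thesis unfolding F_def by simp
  qed (simp add: F_def)
  then obtain y where y: "\<And>n. y n = F n y"
    using nat_rec_fixpoint_exists by blast
  have "seq_op r w y n = 0" for n
  proof -
    have "w r 0 * pochhammer (of_nat (n + 1)) r \<noteq> 0"
      using assms pochhammer_of_nat_Suc_neq_0 by simp
    moreover have "y (n + r) = - seq_op r w (y(n + r := 0)) n / (w r 0 * pochhammer (of_nat (n + 1)) r)"
      using y[of "n + r"] by (simp add: F_def)
    ultimately show ?thesis
      using seq_op_split_top[of r w y n] by simp
  qed
  moreover have "\<forall>m<r. y m = init m"
    using y by (simp add: F_def)
  ultimately show ?thesis by blast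
qed

lemma seq_op_solutions_agree:
  fixes w :: "nat \<Rightarrow> nat \<Rightarrow> 'a::field_char_0"
  assumes "w r 0 \<noteq> 0"
    and y: "\<And>n. n \<le> D \<Longrightarrow> seq_op r w y n = 0"
    and z: "\<And>n. n \<le> D \<Longrightarrow> seq_op r w z n = 0"
    and init: "\<And>m. m < r \<Longrightarrow> y m = z m"
  shows "m \<le> D + r \<Longrightarrow> y m = z m"
proof (induction m rule: less_induct)
  case (less m)
  show ?case
  proof (cases "m < r")
    case True
    then show ?thesis by (rule init)
  next
    case False
    define n where "n = m - r"
    have m: "m = n + r" "n \<le> D"
      using False less.prems by (auto simp: n_def)
    let ?c = "w r 0 * pochhammer (of_nat (n + 1)) r"
    have "seq_op r w (y(m := 0)) n = seq_op r w (z(m := 0)) n"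
      by (rule seq_op_cong) (use less.IH m in auto)
    moreover have "seq_op r w y n = seq_op r w (y(m := 0)) n + ?c * y m"
      using seq_op_split_top[of r w y n] m(1) by simp
    moreover have "seq_op r w z n = seq_op r w (z(m := 0)) n + ?c * z m"
      using seq_op_split_top[of r w z n] m(1) by simp
    ultimately have "?c * y m = ?c * z m"
      using y[OF m(2)] z[OF m(2)] by (metis add_left_cancel)
    moreover have "?c \<noteq> 0"
      using assms(1) pochhammer_of_nat_Suc_neq_0 by simp
    ultimately show ?thesis by simp
  qed
qed

lemma fundamental_solution_ex1:
  fixes \<alpha> :: "'a::field_char_0"
  assumes "poly (L r) \<alpha> \<noteq> 0"
  shows "\<exists>!Y. op_apply \<alpha> r L Y = 0 \<and> (\<forall>k<r. Y $ k = (if k = i then 1 else 0))"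
proof (rule ex_ex1I)
  have top: "shifted_coeffs \<alpha> L r 0 \<noteq> 0"
    using assms by (simp add: shifted_coeffs_top)
  obtain y where y: "\<forall>n. seq_op r (shifted_coeffs \<alpha> L) y n = 0"
    "\<forall>m<r. y m = (if m = i then 1 else 0)"
    using seq_op_solution_exists[where w = "shifted_coeffs \<alpha> L" and r = r
        and init = "\<lambda>m. if m = i then 1 else 0", OF top] by blast
  have "($) (Abs_fps y) = y"
    by (simp add: fun_eq_iff)
  with y show "\<exists>Y. op_apply \<alpha> r L Y = 0 \<and> (\<forall>k<r. Y $ k = (if k = i then 1 else 0))"
    unfolding op_apply_eq_0_iff by (intro exI[of _ "Abs_fps y"]) simp
  fix Y Z
  assume "op_apply \<alpha> r L Y = 0 \<and> (\<forall>k<r. Y $ k = (if k = i then 1 else 0))"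
    and "op_apply \<alpha> r L Z = 0 \<and> (\<forall>k<r. Z $ k = (if k = i then 1 else 0))"
  then have Y: "\<forall>n. seq_op r (shifted_coeffs \<alpha> L) (($) Y) n = 0"
    and Z: "\<forall>n. seq_op r (shifted_coeffs \<alpha> L) (($) Z) n = 0"
    and init: "\<forall>k<r. Y $ k = Z $ k"
    unfolding op_apply_eq_0_iff by auto
  have "Y $ m = Z $ m" for m
    using seq_op_solutions_agree[where w = "shifted_coeffs \<alpha> L" and r = r and D = m
        and y = "($) Y" and z = "($) Z" and m = m, OF top] Y Z init
    by simp
  then show "Y = Z"
    by (simp add: fps_eq_iff)
qed

definition fundamental_solution ::
    "'a::field_char_0 \<Rightarrow> nat \<Rightarrow> (nat \<Rightarrow> 'a poly) \<Rightarrow> nat \<Rightarrow> 'a fps" where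
  "fundamental_solution \<alpha> r L i =
     (THE Y. op_apply \<alpha> r L Y = 0 \<and> (\<forall>k<r. Y $ k = (if k = i then 1 else 0)))"

lemma Fmat_eq_fundamental_solution:
  "Fmat \<alpha> r L D i j = (if i < r \<and> j \<le> D then fundamental_solution \<alpha> r L i $ j else 0)"
  by (simp add: Fmat_def fundamental_solution_def)

lemma fundamental_solution:
  fixes \<alpha> :: "'a::field_char_0"
  assumes "poly (L r) \<alpha> \<noteq> 0"
  shows "seq_op r (shifted_coeffs \<alpha> L) (($) (fundamental_solution \<alpha> r L i)) n = 0"
    and "k < r \<Longrightarrow> fundamental_solution \<alpha> r L i $ k = (if k = i then 1 else 0)"
proof -
  have "op_apply \<alpha> r L (fundamental_solution \<alpha> r L i) = 0
      \<and> (\<forall>k<r. fundamental_solution \<alpha> r L i $ k = (if k = i then 1 else 0))"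
    unfolding fundamental_solution_def
    by (rule theI'[OF fundamental_solution_ex1[where L = L and r = r and i = i, OF assms]])
  then show "seq_op r (shifted_coeffs \<alpha> L) (($) (fundamental_solution \<alpha> r L i)) n = 0"
    and "k < r \<Longrightarrow> fundamental_solution \<alpha> r L i $ k = (if k = i then 1 else 0)"
    by (simp_all add: op_apply_eq_0_iff)
qed

lemma Fmat_in_Fspace:
  fixes \<alpha> :: "'a::field_char_0"
  assumes "poly (L r) \<alpha> \<noteq> 0" "r \<le> D"
  shows "Fmat \<alpha> r L D \<in> Fspace r D"
  using assms fundamental_solution(2)[where L = L and r = r, OF assms(1)]
  unfolding Fspace_def Fmat_eq_fundamental_solution by auto

lemma Fmat_eq_iff:
  fixes \<alpha> :: "'a::field_char_0"
  assumes L: "poly (L r) \<alpha> \<noteq> 0" and M: "M \<in> Fspace r (d + r)"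
  shows "Fmat \<alpha> r L (d + r) = M \<longleftrightarrow>
    (\<forall>i<r. \<forall>n\<le>d. seq_op r (shifted_coeffs \<alpha> L) (M i) n = 0)"
proof
  assume FM: "Fmat \<alpha> r L (d + r) = M"
  show "\<forall>i<r. \<forall>n\<le>d. seq_op r (shifted_coeffs \<alpha> L) (M i) n = 0"
  proof (intro allI impI)
    fix i n
    assume "i < r" "n \<le> d"
    let ?Y = "fundamental_solution \<alpha> r L i"
    have "seq_op r (shifted_coeffs \<alpha> L) (M i) n = seq_op r (shifted_coeffs \<alpha> L) (($) ?Y) n"
      using FM \<open>i < r\<close> \<open>n \<le> d\<close>
      by (intro seq_op_cong) (auto simp: Fmat_eq_fundamental_solution)
    then show "seq_op r (shifted_coeffs \<alpha> L) (M i) n = 0"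
      using fundamental_solution(1)[where L = L and r = r, OF L] by simp
  qed
next
  assume eqs: "\<forall>i<r. \<forall>n\<le>d. seq_op r (shifted_coeffs \<alpha> L) (M i) n = 0"
  have "fundamental_solution \<alpha> r L i $ j = M i j" if "i < r" "j \<le> d + r" for i j
  proof (rule seq_op_solutions_agree[where D = d])
    show "shifted_coeffs \<alpha> L r 0 \<noteq> 0"
      using L by (simp add: shifted_coeffs_top)
    show "seq_op r (shifted_coeffs \<alpha> L) (($) (fundamental_solution \<alpha> r L i)) n = 0" for n
      using fundamental_solution(1)[where L = L and r = r, OF L] .
    show "seq_op r (shifted_coeffs \<alpha> L) (M i) n = 0" if "n \<le> d" for n
      using eqs \<open>i < r\<close> that by blast
    show "fundamental_solution \<alpha> r L i $ k = M i k" if "k < r" for k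
      using fundamental_solution(2)[where L = L and r = r, OF L that] M \<open>i < r\<close> that
      by (simp add: Fspace_def)
  qed (use that in simp)
  then show "Fmat \<alpha> r L (d + r) = M"
    using M by (auto simp: Fmat_eq_fundamental_solution Fspace_def fun_eq_iff)
qed

lemma seq_op_diff_coeffs:
  "seq_op r (\<lambda>j k. u j k - v j k) y n = seq_op r u y n - seq_op r v y n"
  unfolding seq_op_def by (simp add: algebra_simps sum_subtractf)

lemma seq_op_sum_coeffs:
  "seq_op r (\<lambda>j k. \<Sum>l\<in>K. c l * b l j k) y n = (\<Sum>l\<in>K. c l * seq_op r (b l) y n)"
proof -
  have "seq_op r (\<lambda>j k. \<Sum>l\<in>K. c l * b l j k) y n =
     (\<Sum>j\<le>r. \<Sum>k\<le>n. \<Sum>l\<in>K. c l * (b l j k * pochhammer (of_nat (n - k + 1)) j * y (n - k + j)))"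
    unfolding seq_op_def by (simp add: sum_distrib_right mult.assoc)
  also have "\<dots> = (\<Sum>l\<in>K. \<Sum>j\<le>r. \<Sum>k\<le>n. c l * (b l j k * pochhammer (of_nat (n - k + 1)) j * y (n - k + j)))"
    by (subst sum.swap, subst (2) sum.swap, rule refl)
  also have "\<dots> = (\<Sum>l\<in>K. c l * seq_op r (b l) y n)"
    unfolding seq_op_def by (simp add: sum_distrib_left)
  finally show ?thesis .
qed

lemma seq_op_new_column:
  assumes "\<And>j k. k < n \<Longrightarrow> u j k = 0" "u r n = 0" "i < r"
    and "\<And>j. j < r \<Longrightarrow> y j = (if j = i then 1 else 0)"
  shows "seq_op r u y n = u i n * fact i"
proof -
  have "(\<Sum>k\<le>n. u j k * pochhammer (of_nat (n - k + 1)) j * y (n - k + j)) = u j n * fact j * y j" for j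
  proof -
    have "{..n} = insert n {..<n}" by auto
    then show ?thesis
      using assms(1) by (simp add: pochhammer_fact)
  qed
  then have "seq_op r u y n = (\<Sum>j\<le>r. u j n * fact j * y j)"
    unfolding seq_op_def by simp
  also have "\<dots> = (\<Sum>j<r. u j n * fact j * y j)"
    using assms(2) by (simp add: lessThan_Suc_atMost[symmetric])
  also have "\<dots> = (\<Sum>j<r. if j = i then u i n * fact i else 0)"
    using assms(4) by (intro sum.cong) auto
  also have "\<dots> = u i n * fact i"
    using assms(3) by simp
  finally show ?thesis .
qed

text \<open>The shifted coefficient arrays of the fibre over \<open>M\<close>, without the open condition
  \<open>w r 0 \<noteq> 0\<close>.\<close>

definition fiber_coeffs ::
    "nat \<Rightarrow> nat \<Rightarrow> (nat \<Rightarrow> nat \<Rightarrow> 'a) \<Rightarrow> (nat \<Rightarrow> nat \<Rightarrow> 'a::comm_ring_1) \<Rightarrow> bool" where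
  "fiber_coeffs r d M w \<longleftrightarrow>
    (\<forall>j k. r < j \<or> d < k \<longrightarrow> w j k = 0) \<and> (\<forall>i<r. \<forall>n\<le>d. seq_op r w (M i) n = 0)"

lemma fiber_coeffs_unique:
  fixes w :: "nat \<Rightarrow> nat \<Rightarrow> 'a::field_char_0"
  assumes M: "\<And>i j. i < r \<Longrightarrow> j < r \<Longrightarrow> M i j = (if i = j then 1 else 0)"
    and w: "fiber_coeffs r d M w" and w': "fiber_coeffs r d M w'"
    and top: "\<And>k. w r k = w' r k"
  shows "w = w'"
proof -
  define u where "u j k = w j k - w' j k" for j k
  have "\<forall>j. u j n = 0" for n
  proof (induction n rule: less_induct)
    case (less n)
    show ?case
    proof
      fix i
      consider "r < i \<or> d < n" | "i = r" | "i < r" "n \<le> d"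
        by linarith
      then show "u i n = 0"
      proof cases
        case 1
        then show ?thesis using w w' by (auto simp: fiber_coeffs_def u_def)
      next
        case 2
        then show ?thesis using top by (simp add: u_def)
      next
        case 3
        have "seq_op r u (M i) n = 0"
          using seq_op_diff_coeffs[of r w w' "M i" n] w w' 3
          unfolding u_def[abs_def] fiber_coeffs_def by simp
        moreover have "seq_op r u (M i) n = u i n * fact i"
          using less 3 top M by (intro seq_op_new_column) (auto simp: u_def)
        ultimately show ?thesis by simp
      qed
    qed
  qed
  then show ?thesis
    by (auto simp: u_def fun_eq_iff)
qed

lemma fiber_coeffs_exists:
  fixes c :: "nat \<Rightarrow> 'a::field_char_0"
  assumes M: "\<And>i j. i < r \<Longrightarrow> j < r \<Longrightarrow> M i j = (if i = j then 1 else 0)"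
    and c: "\<And>k. d < k \<Longrightarrow> c k = 0"
  shows "\<exists>w. fiber_coeffs r d M w \<and> (\<forall>k. w r k = c k)"
proof -
  \<comment> \<open>\<open>w\<close> is built column by column: \<open>prefix col n\<close> holds the columns before \<open>n\<close> and the top
    entry of column \<open>n\<close>, and the \<open>n\<close>-th equation for row \<open>i\<close> then determines \<open>w i n\<close>.\<close>
  define prefix where
    "prefix col n = (\<lambda>j k. if k < n then col k j else if k = n \<and> j = r then c n else 0)"
    for col :: "nat \<Rightarrow> nat \<Rightarrow> 'a" and n
  define F where "F n col = (\<lambda>i. if n \<le> d then (if i = r then c n else if i < r then
      - seq_op r (prefix col n) (M i) n / fact i else 0) else 0)" for n col
  have "F n col = F n col'" if "\<And>m. m < n \<Longrightarrow> col m = col' m" for n col col'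
  proof -
    have "prefix col n = prefix col' n"
      using that by (auto simp: prefix_def fun_eq_iff)
    then show ?thesis
      unfolding F_def by (simp only:)
  qed
  then obtain col where col: "\<And>n. col n = F n col"
    using nat_rec_fixpoint_exists by blast
  define w where "w j k = col k j" for j k
  have w: "w j k = F k col j" for j k
    using col unfolding w_def by metis
  have w_top: "w r k = c k" for k
    using c by (auto simp: w F_def)
  have "seq_op r w (M i) n = 0" if "i < r" "n \<le> d" for i n
  proof -
    have prefix:
      "prefix col n j k = (if k < n then w j k else if k = n \<and> j = r then c n else 0)" for j k
      by (simp add: prefix_def w_def)
    define u where "u j k = w j k - prefix col n j k" for j k
    have "seq_op r u (M i) n = seq_op r w (M i) n - seq_op r (prefix col n) (M i) n"
      unfolding u_def[abs_def] by (rule seq_op_diff_coeffs)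
    moreover have "seq_op r u (M i) n = u i n * fact i"
      using that M by (intro seq_op_new_column) (auto simp: u_def prefix w_top)
    moreover have "u i n = - seq_op r (prefix col n) (M i) n / fact i"
      using that by (simp add: u_def w F_def prefix_def)
    ultimately show ?thesis by simp
  qed
  moreover have "w j k = 0" if "r < j \<or> d < k" for j k
    using that by (auto simp: w F_def)
  ultimately show ?thesis
    unfolding fiber_coeffs_def using w_top by blast
qed

lemma fiber_coeffs_sum:
  assumes "\<And>l. l \<in> K \<Longrightarrow> fiber_coeffs r d M (b l)"
  shows "fiber_coeffs r d M (\<lambda>j k. \<Sum>l\<in>K. c l * b l j k)"
  using assms unfolding fiber_coeffs_def seq_op_sum_coeffs by auto

lemma fiber_coeffs_basis:
  fixes M :: "nat \<Rightarrow> nat \<Rightarrow> 'a::field_char_0"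
  assumes M: "\<And>i j. i < r \<Longrightarrow> j < r \<Longrightarrow> M i j = (if i = j then 1 else 0)"
  obtains \<beta> where "\<And>w. fiber_coeffs r d M w \<Longrightarrow> w = (\<lambda>j k. \<Sum>l\<le>d. w r l * \<beta> l j k)"
proof -
  have "\<exists>w. fiber_coeffs r d M w \<and> (\<forall>k. w r k = (if k = l then 1 else 0))" if "l \<le> d" for l
    using that by (intro fiber_coeffs_exists[OF M]) auto
  then obtain \<beta> where \<beta>: "\<And>l. l \<le> d \<Longrightarrow> fiber_coeffs r d M (\<beta> l)"
    and \<beta>_top: "\<And>l k. l \<le> d \<Longrightarrow> \<beta> l r k = (if k = l then 1 else 0)"
    by metis
  have "w = (\<lambda>j k. \<Sum>l\<le>d. w r l * \<beta> l j k)" if w: "fiber_coeffs r d M w" for w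
  proof (rule fiber_coeffs_unique[OF M w])
    show "fiber_coeffs r d M (\<lambda>j k. \<Sum>l\<le>d. w r l * \<beta> l j k)"
      by (rule fiber_coeffs_sum) (use \<beta> in auto)
    fix k
    have "(\<Sum>l\<le>d. w r l * \<beta> l r k) = (\<Sum>l\<le>d. if l = k then w r k else 0)"
      by (intro sum.cong) (use \<beta>_top in auto)
    also have "\<dots> = w r k"
      using w by (auto simp: fiber_coeffs_def)
    finally show "w r k = (\<Sum>l\<le>d. w r l * \<beta> l r k)" by simp
  qed
  then show ?thesis
    using that by blast
qed

definition op_of_shifted_coeffs ::
    "'a::comm_ring_1 \<Rightarrow> nat \<Rightarrow> (nat \<Rightarrow> nat \<Rightarrow> 'a) \<Rightarrow> nat \<Rightarrow> 'a poly" where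
  "op_of_shifted_coeffs \<alpha> d w j = (\<Sum>k\<le>d. monom (w j k) k) \<circ>\<^sub>p [:-\<alpha>, 1:]"

lemma coeff_sum_monom: "coeff (\<Sum>k\<le>d. monom (a k) k) m = (if m \<le> d then a m else 0)"
  by (simp add: coeff_sum)

lemma degree_sum_monom_le: "degree (\<Sum>k\<le>d. monom (a k) k) \<le> d"
  by (rule degree_le) (simp add: coeff_sum_monom)

lemma shifted_coeffs_op_of_shifted_coeffs:
  assumes "\<And>j k. d < k \<Longrightarrow> w j k = 0"
  shows "shifted_coeffs \<alpha> (op_of_shifted_coeffs \<alpha> d w) = w"
proof (intro ext)
  fix j k
  have "[:-\<alpha>, 1:] \<circ>\<^sub>p [:\<alpha>, 1:] = [:0, 1:]"
    by (simp add: pcompose_pCons)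
  then show "shifted_coeffs \<alpha> (op_of_shifted_coeffs \<alpha> d w) j k = w j k"
    using assms
    by (simp add: shifted_coeffs_def op_of_shifted_coeffs_def pcompose_assoc[symmetric] pcompose_idR
        coeff_sum_monom)
qed

lemma op_of_shifted_coeffs_shifted_coeffs:
  fixes L :: "nat \<Rightarrow> 'a::idom poly"
  assumes "\<And>j. degree (L j) \<le> d"
  shows "op_of_shifted_coeffs \<alpha> d (shifted_coeffs \<alpha> L) = L"
proof (intro ext)
  fix j
  have "(\<Sum>k\<le>d. monom (shifted_coeffs \<alpha> L j k) k) = L j \<circ>\<^sub>p [:\<alpha>, 1:]"
  proof (rule poly_eqI)
    fix m
    have "degree (L j \<circ>\<^sub>p [:\<alpha>, 1:]) \<le> d"
      using assms[of j] by (simp add: degree_pcompose)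
    then show "coeff (\<Sum>k\<le>d. monom (shifted_coeffs \<alpha> L j k) k) m
        = coeff (L j \<circ>\<^sub>p [:\<alpha>, 1:]) m"
      by (auto simp: coeff_sum_monom shifted_coeffs_def coeff_eq_0)
  qed
  moreover have "[:\<alpha>, 1:] \<circ>\<^sub>p [:-\<alpha>, 1:] = [:0, 1:]"
    by (simp add: pcompose_pCons)
  ultimately show "op_of_shifted_coeffs \<alpha> d (shifted_coeffs \<alpha> L) j = L j"
    by (simp add: op_of_shifted_coeffs_def pcompose_assoc[symmetric] pcompose_idR)
qed

lemma op_of_shifted_coeffs_sum:
  assumes "finite K"
  shows "op_of_shifted_coeffs \<alpha> d (\<lambda>j k. \<Sum>l\<in>K. c l * b l j k) j
    = (\<Sum>l\<in>K. smult (c l) (op_of_shifted_coeffs \<alpha> d (b l) j))"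
proof -
  have "(\<Sum>k\<le>d. monom (\<Sum>l\<in>K. c l * b l j k) k)
      = (\<Sum>l\<in>K. smult (c l) (\<Sum>k\<le>d. monom (b l j k) k))"
    by (rule poly_eqI) (simp add: coeff_sum_monom coeff_sum)
  then show ?thesis
    unfolding op_of_shifted_coeffs_def by (simp only: pcompose_sum pcompose_smult)
qed

lemma op_of_shifted_coeffs_in_NOp:
  fixes \<alpha> :: "'a::field_char_0"
  assumes "\<And>j k. r < j \<Longrightarrow> w j k = 0" "w r 0 \<noteq> 0"
  shows "op_of_shifted_coeffs \<alpha> d w \<in> NOp \<alpha> r d"
proof -
  have "poly (op_of_shifted_coeffs \<alpha> d w r) \<alpha> = w r 0"
    by (simp add: op_of_shifted_coeffs_def poly_pcompose poly_0_coeff_0 coeff_sum_monom)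
  moreover have "op_of_shifted_coeffs \<alpha> d w j = 0" if "r < j" for j
    using assms(1) that by (simp add: op_of_shifted_coeffs_def)
  moreover have "degree (op_of_shifted_coeffs \<alpha> d w j) \<le> d" for j
    using degree_sum_monom_le[where d = d and a = "w j"]
    by (simp add: op_of_shifted_coeffs_def degree_pcompose)
  ultimately show ?thesis
    using assms(2) unfolding NOp_def by auto
qed

lemma NOp_degree_le: "L \<in> NOp \<alpha> r d \<Longrightarrow> degree (L j) \<le> d"
  by (cases "j \<le> r") (auto simp: NOp_def)

lemma Fmat_eq_iff_fiber_coeffs:
  fixes \<alpha> :: "'a::field_char_0"
  assumes L: "L \<in> NOp \<alpha> r d" and M: "M \<in> Fspace r (d + r)"
  shows "Fmat \<alpha> r L (d + r) = M \<longleftrightarrow> fiber_coeffs r d M (shifted_coeffs \<alpha> L)"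
proof -
  have "shifted_coeffs \<alpha> L j k = 0" if "r < j \<or> d < k" for j k
  proof (cases "r < j")
    case True
    then show ?thesis using L by (simp add: NOp_def shifted_coeffs_def)
  next
    case False
    then have "d < k" using that by simp
    moreover have "degree (L j \<circ>\<^sub>p [:\<alpha>, 1:]) \<le> d"
      using NOp_degree_le[OF L, of j] by (simp add: degree_pcompose)
    ultimately show ?thesis by (simp add: shifted_coeffs_def coeff_eq_0)
  qed
  moreover have "poly (L r) \<alpha> \<noteq> 0"
    using L by (simp add: NOp_def)
  ultimately show ?thesis
    using Fmat_eq_iff[OF _ M] unfolding fiber_coeffs_def by auto
qed

lemma exists_in_fiber_with_leading_coeff:
  fixes \<alpha> :: "'a::field_char_0"
  assumes M: "M \<in> Fspace r (d + r)" and p: "degree p \<le> d" "poly p \<alpha> \<noteq> 0"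
  shows "\<exists>L\<in>NOp \<alpha> r d. Fmat \<alpha> r L (d + r) = M \<and> L r = p"
proof -
  have M_init: "\<And>i j. i < r \<Longrightarrow> j < r \<Longrightarrow> M i j = (if i = j then 1 else 0)"
    using M by (simp add: Fspace_def)
  have "degree (p \<circ>\<^sub>p [:\<alpha>, 1:]) \<le> d"
    using p by (simp add: degree_pcompose)
  then have "shifted_coeffs \<alpha> (\<lambda>_. p) r k = 0" if "d < k" for k
    using that by (simp add: shifted_coeffs_def coeff_eq_0)
  then obtain w where w: "fiber_coeffs r d M w" "\<forall>k. w r k = shifted_coeffs \<alpha> (\<lambda>_. p) r k"
    using fiber_coeffs_exists[OF M_init] by blast
  define L where "L = op_of_shifted_coeffs \<alpha> d w"
  have "L \<in> NOp \<alpha> r d"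
    unfolding L_def using w p(2)
    by (intro op_of_shifted_coeffs_in_NOp) (auto simp: fiber_coeffs_def shifted_coeffs_top)
  moreover have "shifted_coeffs \<alpha> L = w"
    unfolding L_def using w(1)
    by (intro shifted_coeffs_op_of_shifted_coeffs) (auto simp: fiber_coeffs_def)
  then have "Fmat \<alpha> r L (d + r) = M"
    using Fmat_eq_iff_fiber_coeffs[OF \<open>L \<in> NOp \<alpha> r d\<close> M] w(1) by simp
  moreover have "L r = op_of_shifted_coeffs \<alpha> d (shifted_coeffs \<alpha> (\<lambda>_. p)) r"
    unfolding L_def using w(2) by (simp add: op_of_shifted_coeffs_def)
  then have "L r = p"
    using op_of_shifted_coeffs_shifted_coeffs[where L = "\<lambda>_. p" and d = d and \<alpha> = \<alpha>] p(1)
    by simp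
  ultimately show ?thesis by blast
qed

lemma fiber_coords_in_span:
  fixes \<alpha> :: "'a::field_char_0"
  assumes M: "M \<in> Fspace r (d + r)"
  obtains b where "\<And>L. L \<in> NOp \<alpha> r d \<Longrightarrow> Fmat \<alpha> r L (d + r) = M \<Longrightarrow>
      \<exists>c. op_coords L = (\<lambda>x. \<Sum>l<Suc d. c l * b l x)"
proof -
  have "\<And>i j. i < r \<Longrightarrow> j < r \<Longrightarrow> M i j = (if i = j then 1 else 0)"
    using M by (simp add: Fspace_def)
  then obtain \<beta>
    where \<beta>: "\<And>w. fiber_coeffs r d M w \<Longrightarrow> w = (\<lambda>j k. \<Sum>l\<le>d. w r l * \<beta> l j k)"
    using fiber_coeffs_basis by blast
  define b where "b l = op_coords (op_of_shifted_coeffs \<alpha> d (\<beta> l))" for l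
  have "\<exists>c. op_coords L = (\<lambda>x. \<Sum>l<Suc d. c l * b l x)"
    if L: "L \<in> NOp \<alpha> r d" and "Fmat \<alpha> r L (d + r) = M" for L
  proof -
    define c where "c l = shifted_coeffs \<alpha> L r l" for l
    have "fiber_coeffs r d M (shifted_coeffs \<alpha> L)"
      using Fmat_eq_iff_fiber_coeffs[OF L M] that(2) by simp
    then have "shifted_coeffs \<alpha> L = (\<lambda>j k. \<Sum>l\<le>d. c l * \<beta> l j k)"
      unfolding c_def by (rule \<beta>)
    moreover have "op_of_shifted_coeffs \<alpha> d (shifted_coeffs \<alpha> L) = L"
      using NOp_degree_le[OF L] by (rule op_of_shifted_coeffs_shifted_coeffs)
    ultimately have "L = op_of_shifted_coeffs \<alpha> d (\<lambda>j k. \<Sum>l\<le>d. c l * \<beta> l j k)"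
      by simp
    then have "L j = (\<Sum>l\<le>d. smult (c l) (op_of_shifted_coeffs \<alpha> d (\<beta> l) j))" for j
      by (simp add: op_of_shifted_coeffs_sum)
    then have "op_coords L = (\<lambda>x. \<Sum>l<Suc d. c l * b l x)"
      by (auto simp: fun_eq_iff op_coords_def b_def coeff_sum lessThan_Suc_atMost)
    then show ?thesis by blast
  qed
  then show ?thesis
    using that by blast
qed

lemma fiber_alg_indep_leading_coords:
  fixes \<alpha> :: "'a::field_char_0"
  assumes M: "M \<in> Fspace r (d + r)"
  shows "alg_indep_on (op_coords ` {L\<in>NOp \<alpha> r d. Fmat \<alpha> r L (d + r) = M})
    ((\<lambda>k. (r, k)) ` {..d})"
  unfolding alg_indep_on_def
proof (intro allI impI)
  fix P :: "(nat \<times> nat \<Rightarrow> 'a) \<Rightarrow> 'a" and v :: "nat \<times> nat \<Rightarrow> 'a"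
  assume P: "polyfun_in ((\<lambda>k. (r, k)) ` {..d}) P"
    and vanish: "\<forall>u\<in>op_coords ` {L\<in>NOp \<alpha> r d. Fmat \<alpha> r L (d + r) = M}. P u = 0"
  \<comment> \<open>Adding \<open>t\<close> to the constant term of \<open>L r\<close> stays in the fibre for all but one \<open>t\<close>.\<close>
  define e :: "nat \<times> nat \<Rightarrow> 'a" where "e x = (if x = (r, 0) then 1 else 0)" for x
  define q where "q = (\<Sum>k\<le>d. monom (v (r, k)) k)"
  have "P (\<lambda>x. v x + t * e x) = 0" if t: "t \<noteq> - poly q \<alpha>" for t
  proof -
    have "degree (q + monom t 0) \<le> d"
      unfolding q_def using degree_monom_le[of t 0]
      by (intro degree_add_le degree_sum_monom_le) simp
    moreover have "poly (q + monom t 0) \<alpha> \<noteq> 0"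
      using t by (simp add: poly_monom add_eq_0_iff)
    ultimately obtain L
      where L: "L \<in> NOp \<alpha> r d" "Fmat \<alpha> r L (d + r) = M" "L r = q + monom t 0"
      using exists_in_fiber_with_leading_coeff[OF M] by blast
    have "P (\<lambda>x. v x + t * e x) = P (op_coords L)"
      by (rule polyfun_in_cong[OF P])
        (auto simp: op_coords_def L(3) q_def e_def coeff_sum_monom coeff_monom split: if_splits)
    also have "\<dots> = 0"
      using vanish L by blast
    finally show ?thesis .
  qed
  then have "{t. P (\<lambda>x. v x + t * e x) \<noteq> 0} \<subseteq> {- poly q \<alpha>}"
    by blast
  then show "P v = 0"
    by (intro polyfun_in_eq_0_if_finite_nonzeros_on_line[OF P]) (auto intro: finite_subset)
qed

lemma alg_dim_fiber:
  fixes \<alpha> :: "'a::field_char_0"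
  assumes M: "M \<in> Fspace r (d + r)"
  shows "alg_dim (op_coords ` {L\<in>NOp \<alpha> r d. Fmat \<alpha> r L (d + r) = M}) = Suc d"
proof (rule alg_dim_eqI)
  show "finite ((\<lambda>k. (r, k)) ` {..d})" "card ((\<lambda>k. (r, k)) ` {..d}) = Suc d"
    by (simp_all add: card_image inj_on_def)
  show "alg_indep_on (op_coords ` {L\<in>NOp \<alpha> r d. Fmat \<alpha> r L (d + r) = M})
      ((\<lambda>k. (r, k)) ` {..d})"
    using M by (rule fiber_alg_indep_leading_coords)
  obtain b where "\<And>L. L \<in> NOp \<alpha> r d \<Longrightarrow> Fmat \<alpha> r L (d + r) = M \<Longrightarrow>
      \<exists>c. op_coords L = (\<lambda>x. \<Sum>l<Suc d. c l * b l x)"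
    using fiber_coords_in_span[OF M] by blast
  then show "card I \<le> Suc d"
    if "finite I" "alg_indep_on (op_coords ` {L\<in>NOp \<alpha> r d. Fmat \<alpha> r L (d + r) = M}) I" for I
    using that by (intro alg_indep_on_card_le[where b = b]) auto
qed

theorem lemma20:
  fixes \<alpha> :: "'a::{alg_closed_field, field_char_0}" and r d :: nat
  defines "\<psi> \<equiv> (\<lambda>L. Fmat \<alpha> r L (d + r))"
  shows "(\<forall>L\<in>NOp \<alpha> r d. \<psi> L \<in> Fspace r (d + r))
       \<and> (\<forall>M\<in>Fspace r (d + r). \<exists>L\<in>NOp \<alpha> r d. \<psi> L = M)
       \<and> (\<exists>n. \<forall>M\<in>Fspace r (d + r).
              alg_dim (op_coords ` {L\<in>NOp \<alpha> r d. \<psi> L = M}) = n)"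
  unfolding \<psi>_def
proof (intro conjI)
  show "\<forall>L\<in>NOp \<alpha> r d. Fmat \<alpha> r L (d + r) \<in> Fspace r (d + r)"
    by (auto simp: NOp_def intro: Fmat_in_Fspace)
  show "\<forall>M\<in>Fspace r (d + r). \<exists>L\<in>NOp \<alpha> r d. Fmat \<alpha> r L (d + r) = M"
    using exists_in_fiber_with_leading_coeff[where p = 1 and \<alpha> = \<alpha> and r = r and d = d] by auto
  show "\<exists>n. \<forall>M\<in>Fspace r (d + r).
      alg_dim (op_coords ` {L\<in>NOp \<alpha> r d. Fmat \<alpha> r L (d + r) = M}) = n"
    using alg_dim_fiber by blast
qed

end
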